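(* Problem (RO-$\Sigma$) has an optimal solution $(B,\beta_1,\ldots,\beta_B)$ such that $c\prec_{\beta_1\cdots\beta_B}c'$ for all contests $c<c'$ with $c\equiv c'$.
   Context: A ballot style consists of contests $\mathcal{C}=\{1,\ldots,C\}$, candidates $\mathcal{N}=\{1,\ldots,N\}$ partitioned into nonempty sets $\mathcal{N}_c$ ($c\in\mathcal{C}$), and positive integers $v_c$. A filled-out ballot is a subset $\beta\subseteq\mathcal{N}$; $\mathscr{B}=\{\beta\subseteq\mathcal{N}: |\mathcal{N}_c\cap\beta|\le v_c\ \forall c\}$. For $i\in\mathcal{N}_c$: $T^*_i(\beta_1,\ldots,\beta_B)=\sum_{b=1}^B\mathbb{I}\{i\in\beta_b\text{ and }|\mathcal{N}_c\cap\beta_b|\le v_c\}$, and for a bijection $\sigma$ of $\mathcal{N}$, $T^\sigma_i(\beta_1,\ldots,\beta_B)=\sum_{b=1}^B\mathbb{I}\{\sigma(i)\in\beta_b\text{ and }|\{\sigma(j)\in\beta_b: j\in\mathcal{N}_c\}|\le v_c\}$. $\Sigma$ is the set of non-identity bijections $\mathcal{N}\to\mathcal{N}$. Problem (RO-$\Sigma$): minimize $B$ over $B\in\mathbb{N}$ and $\beta_1,\ldots,\beta_B\in\mathscr{B}$ subject to $T^\sigma(\beta_1,\ldots,\beta_B)\neq T^*(\beta_1,\ldots,\beta_B)$ for all $\sigma\in\Sigma$. Two contests $c,c'$ are equivalent, $c\equiv c'$, iff $|\mathcal{N}_c|=|\mathcal{N}_{c'}|$ and $v_c=v_{c'}$.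 $\mathcal{N}_c^k$ denotes the candidate with the $k$-th smallest index in $\mathcal{N}_c$. With $n(i)=|\{b\in\{1,\ldots,B\}: i\in\beta_b\}|$, we write $c\prec_{\beta_1\cdots\beta_B}c'$ iff $c\equiv c'$ and there exists $k\in\{1,\ldots,|\mathcal{N}_c|\}$ with $n(\mathcal{N}_c^{m})=n(\mathcal{N}_{c'}^{m})$ for all $m\in\{k+1,\ldots,|\mathcal{N}_c|\}$ and $n(\mathcal{N}_c^{k})<n(\mathcal{N}_{c'}^{k})$. *)

theory Defs
  imports Main
begin

definition ballot_style :: "nat \<Rightarrow> nat \<Rightarrow> (nat \<Rightarrow> nat set) \<Rightarrow> (nat \<Rightarrow> nat) \<Rightarrow> bool" where
  "ballot_style C N Nc v \<longleftrightarrow>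
     (\<forall>c\<in>{1..C}. Nc c \<noteq> {} \<and> v c > 0) \<and>
     (\<forall>c\<in>{1..C}. \<forall>c'\<in>{1..C}. c \<noteq> c' \<longrightarrow> Nc c \<inter> Nc c' = {}) \<and>
     (\<Union>c\<in>{1..C}. Nc c) = {1..N}"

definition valid_ballots :: "nat \<Rightarrow> nat \<Rightarrow> (nat \<Rightarrow> nat set) \<Rightarrow> (nat \<Rightarrow> nat) \<Rightarrow> nat set set" where
  "valid_ballots C N Nc v = {\<beta>. \<beta> \<subseteq> {1..N} \<and> (\<forall>c\<in>{1..C}. card (Nc c \<inter> \<beta>) \<le> v c)}"

definition contest_of :: "nat \<Rightarrow> (nat \<Rightarrow> nat set) \<Rightarrow> nat \<Rightarrow> nat" where
  "contest_of C Nc i = (THE c. c \<in> {1..C} \<and> i \<in> Nc c)"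

text \<open>T^sigma_i(beta_1..beta_B), with the ballots given as a list (B = its length).
  T^* is T^id.\<close>
definition Tsig :: "nat \<Rightarrow> (nat \<Rightarrow> nat set) \<Rightarrow> (nat \<Rightarrow> nat) \<Rightarrow> (nat \<Rightarrow> nat) \<Rightarrow> nat set list \<Rightarrow> nat \<Rightarrow> nat" where
  "Tsig C Nc v \<sigma> bs i =
     (\<Sum>b<length bs.
        if \<sigma> i \<in> bs ! b \<and>
           card {\<sigma> j | j. j \<in> Nc (contest_of C Nc i) \<and> \<sigma> j \<in> bs ! b} \<le> v (contest_of C Nc i)
        then 1 else 0)"

definition Tstar :: "nat \<Rightarrow> (nat \<Rightarrow> nat set) \<Rightarrow> (nat \<Rightarrow> nat) \<Rightarrow> nat set list \<Rightarrow> nat \<Rightarrow> nat" where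
  "Tstar C Nc v bs i =
     (\<Sum>b<length bs.
        if i \<in> bs ! b \<and> card (Nc (contest_of C Nc i) \<inter> bs ! b) \<le> v (contest_of C Nc i)
        then 1 else 0)"

definition feasible_RO :: "nat \<Rightarrow> nat \<Rightarrow> (nat \<Rightarrow> nat set) \<Rightarrow> (nat \<Rightarrow> nat) \<Rightarrow> nat set list \<Rightarrow> bool" where
  "feasible_RO C N Nc v bs \<longleftrightarrow>
     (\<forall>\<beta>\<in>set bs. \<beta> \<in> valid_ballots C N Nc v) \<and>
     (\<forall>\<sigma>. bij_betw \<sigma> {1..N} {1..N} \<and> (\<exists>i\<in>{1..N}. \<sigma> i \<noteq> i) \<longrightarrow>
        (\<exists>i\<in>{1..N}. Tsig C Nc v \<sigma> bs i \<noteq> Tstar C Nc v bs i))"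

definition optimal_RO :: "nat \<Rightarrow> nat \<Rightarrow> (nat \<Rightarrow> nat set) \<Rightarrow> (nat \<Rightarrow> nat) \<Rightarrow> nat set list \<Rightarrow> bool" where
  "optimal_RO C N Nc v bs \<longleftrightarrow>
     feasible_RO C N Nc v bs \<and> (\<forall>bs'. feasible_RO C N Nc v bs' \<longrightarrow> length bs \<le> length bs')"

definition contest_equiv :: "(nat \<Rightarrow> nat set) \<Rightarrow> (nat \<Rightarrow> nat) \<Rightarrow> nat \<Rightarrow> nat \<Rightarrow> bool" where
  "contest_equiv Nc v c c' \<longleftrightarrow> card (Nc c) = card (Nc c') \<and> v c = v c'"

definition nvotes :: "nat set list \<Rightarrow> nat \<Rightarrow> nat" where
  "nvotes bs i = card {b. b < length bs \<and> i \<in> bs ! b}"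

definition kth :: "nat set \<Rightarrow> nat \<Rightarrow> nat" where
  "kth S k = sorted_list_of_set S ! (k - 1)"

definition contest_prec :: "(nat \<Rightarrow> nat set) \<Rightarrow> (nat \<Rightarrow> nat) \<Rightarrow> nat set list \<Rightarrow> nat \<Rightarrow> nat \<Rightarrow> bool" where
  "contest_prec Nc v bs c c' \<longleftrightarrow>
     contest_equiv Nc v c c' \<and>
     (\<exists>k\<in>{1..card (Nc c)}.
        (\<forall>m\<in>{k+1..card (Nc c)}. nvotes bs (kth (Nc c) m) = nvotes bs (kth (Nc c') m)) \<and>
        nvotes bs (kth (Nc c) k) < nvotes bs (kth (Nc c') k))"

end

theory Submission
  imports Defs
begin

text \<open>All optimal solutions have the same length \<open>L\<close>, so vote counts are digits in base
  \<open>M = L + 1\<close> and the counts of a contest, read from its highest-indexed candidate down, form a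
  base-\<open>M\<close> key; comparing keys is the order \<open>\<prec>\<close>. Among the optimal solutions take one
  maximising \<open>\<Sum>\<^sub>c c \<cdot> key c\<close>. For equivalent contests \<open>c < c'\<close>, the involution exchanging
  the \<open>k\<close>-th candidates of \<open>c\<close> and \<open>c'\<close> maps contests onto contests with the same vote
  limit, so relabelling the ballots by it preserves feasibility and length. If
  \<open>key c > key c'\<close> the relabelling increases the weighted sum; if \<open>key c = key c'\<close> it leaves
  every count unchanged, so \<open>T\<^sup>\<sigma> = T\<^sup>*\<close> for this \<open>\<sigma> \<noteq> id\<close>, contradicting
  feasibility. Hence \<open>key c < key c'\<close>, which is \<open>c \<prec> c'\<close>.\<close>

definition base_value :: "(nat \<Rightarrow> nat) \<Rightarrow> nat \<Rightarrow> nat \<Rightarrow> nat" where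
  "base_value a M K = (\<Sum>m=1..K. a m * M ^ m)"

lemma base_value_Suc: "base_value a M (Suc K) = base_value a M K + a (Suc K) * M ^ Suc K"
  unfolding base_value_def by (simp add: sum.cl_ivl_Suc)

lemma base_value_less_power:
  assumes "\<forall>m. a m < M"
  shows "base_value a M K < M ^ Suc K"
proof (induction K)
  case 0
  then show ?case using assms by (simp add: base_value_def) (metis gr_zeroI less_nat_zero_code)
next
  case (Suc K)
  have "(a (Suc K) + 1) * M ^ Suc K \<le> M * M ^ Suc K"
    using assms by (intro mult_right_mono) (simp_all add: Suc_le_eq)
  then show ?case using Suc base_value_Suc[of a M K] by (simp add: algebra_simps)
qed

lemma base_value_Suc_div_mod:
  assumes "\<forall>m. a m < M"
  shows "base_value a M (Suc K) div M ^ Suc K = a (Suc K)"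
    and "base_value a M (Suc K) mod M ^ Suc K = base_value a M K"
proof -
  have "M > 0" using assms by (metis gr_zeroI less_nat_zero_code)
  then show "base_value a M (Suc K) div M ^ Suc K = a (Suc K)"
    and "base_value a M (Suc K) mod M ^ Suc K = base_value a M K"
    using base_value_less_power[OF assms, of K] unfolding base_value_Suc by simp_all
qed

lemma base_value_inject:
  assumes "\<forall>m. a m < M" "\<forall>m. b m < M" "base_value a M K = base_value b M K"
  shows "\<forall>m\<in>{1..K}. a m = b m"
  using assms(3)
proof (induction K)
  case (Suc K)
  then have "a (Suc K) = b (Suc K)" "base_value a M K = base_value b M K"
    using base_value_Suc_div_mod[OF assms(1), of K] base_value_Suc_div_mod[OF assms(2), of K] by metis+
  then show ?case using Suc.IH by (auto simp: le_Suc_eq)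
qed simp

lemma base_value_less_imp_lex:
  assumes "\<forall>m. a m < M" "\<forall>m. b m < M" "base_value a M K < base_value b M K"
  shows "\<exists>k\<in>{1..K}. (\<forall>m\<in>{k+1..K}. a m = b m) \<and> a k < b k"
  using assms(3)
proof (induction K)
  case 0
  then show ?case by (simp add: base_value_def)
next
  case (Suc K)
  have le: "a (Suc K) \<le> b (Suc K)"
    using div_le_mono[OF less_imp_le[OF Suc.prems], of "M ^ Suc K"]
    by (simp only: base_value_Suc_div_mod[OF assms(1)] base_value_Suc_div_mod[OF assms(2)])
  show ?case
  proof (cases "a (Suc K) = b (Suc K)")
    case True
    then have "base_value a M K < base_value b M K"
      using Suc.prems by (simp add: base_value_Suc)
    then obtain k where "k \<in> {1..K}" "\<forall>m\<in>{k+1..K}. a m = b m" "a k < b k"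
      using Suc.IH by blast
    with True show ?thesis by (intro bexI[of _ k]) (auto simp: le_Suc_eq)
  qed (use le in \<open>intro bexI[of _ "Suc K"], auto\<close>)
qed

lemma kth_mem:
  assumes "finite S" "m \<in> {1..card S}"
  shows "kth S m \<in> S"
proof -
  have "m - 1 < length (sorted_list_of_set S)" using assms by auto
  then show ?thesis unfolding kth_def using assms(1) by (metis nth_mem set_sorted_list_of_set)
qed

lemma kth_surj:
  assumes "finite S" "x \<in> S"
  shows "\<exists>m\<in>{1..card S}. kth S m = x"
proof -
  obtain k where "k < length (sorted_list_of_set S)" "sorted_list_of_set S ! k = x"
    using assms by (metis in_set_conv_nth set_sorted_list_of_set)
  then have "Suc k \<in> {1..card S}" "kth S (Suc k) = x" unfolding kth_def by auto
  then show ?thesis by blast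
qed

lemma kth_image: "finite S \<Longrightarrow> kth S ` {1..card S} = S"
  using kth_mem kth_surj by blast

definition swap_sorted :: "nat set \<Rightarrow> nat set \<Rightarrow> nat \<Rightarrow> nat" where
  "swap_sorted A B x =
     (let xs = sorted_list_of_set A; ys = sorted_list_of_set B
      in case map_of (zip xs ys @ zip ys xs) x of None \<Rightarrow> x | Some y \<Rightarrow> y)"

lemma map_of_zip_notin: "x \<notin> set xs \<Longrightarrow> map_of (zip xs ys) x = None"
  by (auto simp: map_of_eq_None_iff dest: set_zip_leftD)

lemma swap_sorted_outside:
  "finite A \<Longrightarrow> finite B \<Longrightarrow> x \<notin> A \<Longrightarrow> x \<notin> B \<Longrightarrow> swap_sorted A B x = x"
  unfolding swap_sorted_def Let_def by (simp add: map_add_def map_of_zip_notin)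

lemma swap_sorted_kth:
  assumes fin: "finite A" "finite B" and disj: "A \<inter> B = {}" and card: "card A = card B"
    and m: "m \<in> {1..card A}"
  shows "swap_sorted A B (kth A m) = kth B m" and "swap_sorted A B (kth B m) = kth A m"
proof -
  define xs ys where "xs = sorted_list_of_set A" and "ys = sorted_list_of_set B"
  have len: "length xs = length ys" "m - 1 < length xs" using card m fin by (auto simp: xs_def ys_def)
  have dist: "distinct xs" "distinct ys" by (simp_all add: xs_def ys_def)
  have kth: "kth A m = xs ! (m - 1)" "kth B m = ys ! (m - 1)"
    by (simp_all add: kth_def xs_def ys_def)
  have "kth A m \<notin> set ys" "kth B m \<notin> set xs"
    using kth_mem[OF fin(1) m] kth_mem[OF fin(2)] m card disj by (auto simp: xs_def ys_def fin)
  then show "swap_sorted A B (kth A m) = kth B m" and "swap_sorted A B (kth B m) = kth A m"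
    unfolding swap_sorted_def Let_def xs_def[symmetric] ys_def[symmetric]
    using map_of_zip_nth[of xs ys "m - 1"] map_of_zip_nth[of ys xs "m - 1"] len dist kth
    by (simp_all add: map_add_def map_of_zip_notin)
qed

lemma swap_sorted_image:
  assumes fin: "finite A" "finite B" and disj: "A \<inter> B = {}" and card: "card A = card B"
  shows "swap_sorted A B ` A = B" and "swap_sorted A B ` B = A"
proof -
  have "swap_sorted A B ` kth A ` {1..card A} = kth B ` {1..card B}"
    "swap_sorted A B ` kth B ` {1..card B} = kth A ` {1..card A}"
    using swap_sorted_kth[OF assms] card unfolding image_image by (auto intro!: image_cong)
  then show "swap_sorted A B ` A = B" and "swap_sorted A B ` B = A"
    by (simp_all only: kth_image fin)
qed

lemma swap_sorted_swap_sorted: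
  assumes fin: "finite A" "finite B" and disj: "A \<inter> B = {}" and card: "card A = card B"
  shows "swap_sorted A B (swap_sorted A B x) = x"
proof -
  consider "x \<in> A" | "x \<in> B" | "x \<notin> A" "x \<notin> B" by blast
  then show ?thesis
  proof cases
    case 1
    then obtain m where "m \<in> {1..card A}" "x = kth A m" using kth_surj fin by metis
    then show ?thesis using swap_sorted_kth[OF assms] by simp
  next
    case 2
    then obtain m where "m \<in> {1..card A}" "x = kth B m" using kth_surj fin card by metis
    then show ?thesis using swap_sorted_kth[OF assms] by simp
  qed (simp add: swap_sorted_outside fin)
qed

definition involution_on :: "'a set \<Rightarrow> ('a \<Rightarrow> 'a) \<Rightarrow> bool" where
  "involution_on S p \<longleftrightarrow> (\<forall>x\<in>S. p x \<in> S \<and> p (p x) = x)"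

lemma involution_on_bij_betw: "involution_on S p \<Longrightarrow> bij_betw p S S"
  unfolding involution_on_def by (intro bij_betw_byWitness[where f' = p]) auto

lemma involution_on_inj_on: "involution_on S p \<Longrightarrow> inj_on p S"
  using involution_on_bij_betw bij_betw_imp_inj_on by blast

lemma involution_on_image_image: "involution_on S p \<Longrightarrow> T \<subseteq> S \<Longrightarrow> p ` p ` T = T"
  unfolding involution_on_def by (force simp: image_image)

lemma involution_on_mem_image:
  "involution_on S p \<Longrightarrow> T \<subseteq> S \<Longrightarrow> y \<in> S \<Longrightarrow> y \<in> p ` T \<longleftrightarrow> p y \<in> T"
  unfolding involution_on_def by (metis image_eqI imageE subsetD)

lemma involution_on_card_Int_image:
  assumes p: "involution_on S p" and A: "A \<subseteq> S" and B: "B \<subseteq> S"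
  shows "card (A \<inter> p ` B) = card (p ` A \<inter> B)"
proof -
  have "p ` B \<subseteq> S" using p B unfolding involution_on_def by auto
  have "inj_on p (A \<inter> p ` B)" using A involution_on_inj_on[OF p] by (auto intro: inj_on_subset)
  then have "card (A \<inter> p ` B) = card (p ` (A \<inter> p ` B))" by (simp add: card_image)
  also have "p ` (A \<inter> p ` B) = p ` A \<inter> B"
    using inj_on_image_Int[OF involution_on_inj_on[OF p] A \<open>p ` B \<subseteq> S\<close>]
      involution_on_image_image[OF p B] by simp
  finally show ?thesis .
qed

definition contest_symmetry ::
    "nat \<Rightarrow> nat \<Rightarrow> (nat \<Rightarrow> nat set) \<Rightarrow> (nat \<Rightarrow> nat) \<Rightarrow> (nat \<Rightarrow> nat) \<Rightarrow> bool" where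
  "contest_symmetry C N Nc v p \<longleftrightarrow>
     involution_on {1..N} p \<and> (\<forall>d\<in>{1..C}. \<exists>d'\<in>{1..C}. p ` Nc d = Nc d' \<and> v d' = v d)"

lemma nvotes_eq_sum: "nvotes bs i = (\<Sum>b<length bs. if i \<in> bs ! b then 1 else 0)"
proof -
  have "{b. b < length bs \<and> i \<in> bs ! b} = {b \<in> {..<length bs}. i \<in> bs ! b}" by auto
  then show ?thesis unfolding nvotes_def by (simp add: sum.inter_filter[symmetric])
qed

lemma nvotes_le_length: "nvotes bs i \<le> length bs"
  unfolding nvotes_def by (rule order.trans[OF card_mono[of "{..<length bs}"]]) auto

lemma Tsig_eq:
  "Tsig C Nc v \<sigma> bs i =
     (\<Sum>b<length bs. if \<sigma> i \<in> bs ! b \<and>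
        card (\<sigma> ` Nc (contest_of C Nc i) \<inter> bs ! b) \<le> v (contest_of C Nc i) then 1 else 0)"
proof -
  have "{\<sigma> j | j. j \<in> A \<and> \<sigma> j \<in> \<beta>} = \<sigma> ` A \<inter> \<beta>" for A \<beta> by blast
  then show ?thesis unfolding Tsig_def by simp
qed

definition singleton_ballots :: "nat \<Rightarrow> nat set list" where
  "singleton_ballots n = concat (map (\<lambda>i. replicate i {i}) [1..<Suc n])"

lemma set_singleton_ballots: "set (singleton_ballots n) = (\<lambda>i. {i}) ` {1..n}"
  unfolding singleton_ballots_def by auto

lemma nvotes_singleton_ballots:
  assumes "j \<in> {1..n}"
  shows "nvotes (singleton_ballots n) j = j"
proof -
  have "length (filter (\<lambda>\<beta>. j \<in> \<beta>) (singleton_ballots n)) = (if j \<in> {1..n} then j else 0)"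
    unfolding singleton_ballots_def by (induction n) (auto simp: filter_replicate)
  with assms show ?thesis unfolding nvotes_def length_filter_conv_card[symmetric] by simp
qed

definition contest_key :: "(nat \<Rightarrow> nat set) \<Rightarrow> nat \<Rightarrow> nat set list \<Rightarrow> nat \<Rightarrow> nat" where
  "contest_key Nc M bs d = base_value (\<lambda>m. nvotes bs (kth (Nc d) m)) M (card (Nc d))"

definition potential :: "nat \<Rightarrow> (nat \<Rightarrow> nat set) \<Rightarrow> nat \<Rightarrow> nat set list \<Rightarrow> nat" where
  "potential C Nc M bs = (\<Sum>d\<in>{1..C}. d * contest_key Nc M bs d)"

lemma potential_le:
  assumes "length bs < M"
  shows "potential C Nc M bs \<le> (\<Sum>d\<in>{1..C}. d * M ^ Suc (card (Nc d)))"
  unfolding potential_def contest_key_def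
proof (intro sum_mono mult_left_mono less_imp_le)
  show "base_value (\<lambda>m. nvotes bs (kth (Nc d) m)) M (card (Nc d)) < M ^ Suc (card (Nc d))" for d
    using nvotes_le_length assms by (intro base_value_less_power) (metis le_less_trans)
qed simp

lemma weighted_sum_increases_by_swap:
  fixes f g :: "nat \<Rightarrow> nat"
  assumes A: "finite A" "c \<in> A" "c' \<in> A" and lt: "c < c'" "f c' < f c"
    and g: "g c = f c'" "g c' = f c" "\<forall>d\<in>A - {c} - {c'}. g d = f d"
  shows "(\<Sum>d\<in>A. d * f d) < (\<Sum>d\<in>A. d * g d)"
proof -
  have split: "(\<Sum>d\<in>A. d * h d) = c * h c + c' * h c' + (\<Sum>d\<in>A - {c} - {c'}. d * h d)"
    for h :: "nat \<Rightarrow> nat"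
    using A lt(1) by (simp add: sum.remove[of A c] sum.remove[of "A - {c}" c'])
  have rest: "(\<Sum>d\<in>A - {c} - {c'}. d * g d) = (\<Sum>d\<in>A - {c} - {c'}. d * f d)"
    using g(3) by simp
  obtain e where e: "c' = Suc (c + e)" using lt(1) less_iff_Suc_add by auto
  obtain e' where e': "f c = Suc (f c' + e')" using lt(2) less_iff_Suc_add by auto
  have "c * f c + c' * f c' < c * f c' + c' * f c" unfolding e e' by (simp add: algebra_simps)
  then show ?thesis unfolding split[of f] split[of g] rest g(1,2) by simp
qed

context
  fixes C N :: nat and Nc :: "nat \<Rightarrow> nat set" and v :: "nat \<Rightarrow> nat"
  assumes style: "ballot_style C N Nc v"
begin

lemma contest_subset: "d \<in> {1..C} \<Longrightarrow> Nc d \<subseteq> {1..N}"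
  using style unfolding ballot_style_def by blast

lemma finite_contest: "d \<in> {1..C} \<Longrightarrow> finite (Nc d)"
  using contest_subset finite_subset by blast

lemma contest_nonempty: "d \<in> {1..C} \<Longrightarrow> Nc d \<noteq> {}"
  using style unfolding ballot_style_def by blast

lemma contests_disjoint: "d \<in> {1..C} \<Longrightarrow> d' \<in> {1..C} \<Longrightarrow> d \<noteq> d' \<Longrightarrow> Nc d \<inter> Nc d' = {}"
  using style unfolding ballot_style_def by blast

lemma contest_of_eq: "d \<in> {1..C} \<Longrightarrow> i \<in> Nc d \<Longrightarrow> contest_of C Nc i = d"
  unfolding contest_of_def using contests_disjoint by (intro the_equality) auto

lemma contest_of_mem: "i \<in> {1..N} \<Longrightarrow> contest_of C Nc i \<in> {1..C} \<and> i \<in> Nc (contest_of C Nc i)"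
  using style contest_of_eq unfolding ballot_style_def by blast

lemma Tstar_eq_nvotes:
  assumes "\<forall>\<beta>\<in>set bs. \<beta> \<in> valid_ballots C N Nc v" "i \<in> {1..N}"
  shows "Tstar C Nc v bs i = nvotes bs i"
proof -
  have "card (Nc (contest_of C Nc i) \<inter> bs ! b) \<le> v (contest_of C Nc i)" if "b < length bs" for b
    using assms contest_of_mem[OF assms(2)] that unfolding valid_ballots_def by auto
  then show ?thesis unfolding Tstar_def nvotes_eq_sum by (intro sum.cong) auto
qed

lemma contest_symmetry_contest_of:
  assumes p: "contest_symmetry C N Nc v p" and i: "i \<in> {1..N}"
  shows "p ` Nc (contest_of C Nc i) = Nc (contest_of C Nc (p i))"
    and "v (contest_of C Nc (p i)) = v (contest_of C Nc i)"
proof -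
  obtain d' where d': "d' \<in> {1..C}" "p ` Nc (contest_of C Nc i) = Nc d'" "v d' = v (contest_of C Nc i)"
    using p contest_of_mem[OF i] unfolding contest_symmetry_def by blast
  then have "contest_of C Nc (p i) = d'" using contest_of_mem[OF i] contest_of_eq by blast
  with d' show "p ` Nc (contest_of C Nc i) = Nc (contest_of C Nc (p i))"
    and "v (contest_of C Nc (p i)) = v (contest_of C Nc i)" by simp_all
qed

text \<open>A symmetry permutes whole contests, so it never causes an overvote on a valid ballot.\<close>
lemma Tsig_contest_symmetry:
  assumes val: "\<forall>\<beta>\<in>set bs. \<beta> \<in> valid_ballots C N Nc v"
    and p: "contest_symmetry C N Nc v p" and i: "i \<in> {1..N}"
  shows "Tsig C Nc v p bs i = nvotes bs (p i)"
proof -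
  have "p i \<in> {1..N}" using p i unfolding contest_symmetry_def involution_on_def by blast
  then have "card (Nc (contest_of C Nc (p i)) \<inter> bs ! b) \<le> v (contest_of C Nc (p i))"
    if "b < length bs" for b
    using val that contest_of_mem unfolding valid_ballots_def by auto
  then show ?thesis
    unfolding Tsig_eq nvotes_eq_sum contest_symmetry_contest_of[OF p i] by (intro sum.cong) auto
qed

lemma feasible_contest_symmetry_moves_nvotes:
  assumes feas: "feasible_RO C N Nc v bs" and p: "contest_symmetry C N Nc v p"
    and moved: "\<exists>i\<in>{1..N}. p i \<noteq> i"
  shows "\<exists>i\<in>{1..N}. nvotes bs (p i) \<noteq> nvotes bs i"
proof -
  have val: "\<forall>\<beta>\<in>set bs. \<beta> \<in> valid_ballots C N Nc v" using feas unfolding feasible_RO_def by blast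
  have "bij_betw p {1..N} {1..N}"
    using p involution_on_bij_betw unfolding contest_symmetry_def by blast
  then obtain i where "i \<in> {1..N}" "Tsig C Nc v p bs i \<noteq> Tstar C Nc v bs i"
    using feas moved unfolding feasible_RO_def by blast
  then show ?thesis using Tsig_contest_symmetry[OF val p] Tstar_eq_nvotes[OF val] by metis
qed

lemma valid_ballot_relabel:
  assumes p: "contest_symmetry C N Nc v p" and \<beta>: "\<beta> \<in> valid_ballots C N Nc v"
  shows "p ` \<beta> \<in> valid_ballots C N Nc v"
proof -
  have inv: "involution_on {1..N} p" and sub: "\<beta> \<subseteq> {1..N}"
    using p \<beta> unfolding contest_symmetry_def valid_ballots_def by auto
  have "card (Nc d \<inter> p ` \<beta>) \<le> v d" if d: "d \<in> {1..C}" for d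
  proof -
    obtain d' where d': "d' \<in> {1..C}" "p ` Nc d' = Nc d" "v d' = v d"
    proof -
      obtain d' where "d' \<in> {1..C}" "p ` Nc d = Nc d'" "v d' = v d"
        using p d unfolding contest_symmetry_def by blast
      then show thesis
        using that[of d'] involution_on_image_image[OF inv contest_subset[OF d]] by metis
    qed
    have "Nc d \<inter> p ` \<beta> = p ` (Nc d' \<inter> \<beta>)"
      using d' inj_on_image_Int[OF involution_on_inj_on[OF inv] contest_subset[OF d'(1)] sub] by simp
    also have "card \<dots> \<le> card (Nc d' \<inter> \<beta>)" by (rule card_image_le) (simp add: finite_contest[OF d'(1)])
    also have "\<dots> \<le> v d'" using \<beta> d'(1) unfolding valid_ballots_def by blast
    finally show ?thesis using d'(3) by simp
  qed
  moreover have "p ` \<beta> \<subseteq> {1..N}" using inv sub unfolding involution_on_def by auto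
  ultimately show ?thesis unfolding valid_ballots_def by blast
qed

lemma nvotes_relabel:
  assumes p: "contest_symmetry C N Nc v p" and sub: "\<forall>\<beta>\<in>set bs. \<beta> \<subseteq> {1..N}" and i: "i \<in> {1..N}"
  shows "nvotes (map ((`) p) bs) i = nvotes bs (p i)"
proof -
  have "involution_on {1..N} p" using p unfolding contest_symmetry_def by blast
  then show ?thesis
    unfolding nvotes_eq_sum using sub i by (intro sum.cong) (auto simp: involution_on_mem_image)
qed

lemma Tsig_relabel:
  assumes p: "contest_symmetry C N Nc v p" and sub: "\<forall>\<beta>\<in>set bs. \<beta> \<subseteq> {1..N}"
    and \<sigma>: "\<sigma> ` {1..N} \<subseteq> {1..N}" and i: "i \<in> {1..N}"
  shows "Tsig C Nc v \<sigma> (map ((`) p) bs) i = Tsig C Nc v (p \<circ> \<sigma> \<circ> p) bs (p i)"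
proof -
  have inv: "involution_on {1..N} p" using p unfolding contest_symmetry_def by blast
  then have pi: "p (p i) = i" using i unfolding involution_on_def by blast
  define D where "D = Nc (contest_of C Nc i)"
  have D: "D \<subseteq> {1..N}" using contest_subset contest_of_mem[OF i] D_def by blast
  have D': "Nc (contest_of C Nc (p i)) = p ` D"
    using contest_symmetry_contest_of(1)[OF p i] D_def by simp
  have "(p \<circ> \<sigma> \<circ> p) ` p ` D = p ` \<sigma> ` p ` p ` D" by (simp add: image_comp)
  then have conj_D: "(p \<circ> \<sigma> \<circ> p) ` p ` D = p ` \<sigma> ` D"
    by (simp only: involution_on_image_image[OF inv D])
  have card: "card (\<sigma> ` D \<inter> p ` \<beta>) = card ((p \<circ> \<sigma> \<circ> p) ` p ` D \<inter> \<beta>)"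
    if "\<beta> \<subseteq> {1..N}" for \<beta>
  proof -
    have "\<sigma> ` D \<subseteq> {1..N}" using \<sigma> D by (meson image_mono order_trans)
    then show ?thesis unfolding conj_D by (rule involution_on_card_Int_image[OF inv _ that])
  qed
  have mem: "\<sigma> i \<in> p ` \<beta> \<longleftrightarrow> (p \<circ> \<sigma> \<circ> p) (p i) \<in> \<beta>" if "\<beta> \<subseteq> {1..N}" for \<beta>
    using involution_on_mem_image[OF inv that, of "\<sigma> i"] \<sigma> i pi by (simp add: image_subset_iff)
  show ?thesis
    unfolding Tsig_eq D_def[symmetric] D' contest_symmetry_contest_of(2)[OF p i] length_map
  proof (intro sum.cong refl)
    fix b assume "b \<in> {..<length bs}"
    then have b: "b < length bs" "bs ! b \<subseteq> {1..N}" using sub by auto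
    then show "(if \<sigma> i \<in> map ((`) p) bs ! b \<and>
                  card (\<sigma> ` D \<inter> map ((`) p) bs ! b) \<le> v (contest_of C Nc i) then 1 else 0) =
               (if (p \<circ> \<sigma> \<circ> p) (p i) \<in> bs ! b \<and>
                  card ((p \<circ> \<sigma> \<circ> p) ` p ` D \<inter> bs ! b) \<le> v (contest_of C Nc i) then 1 else 0)"
      by (simp only: nth_map mem card)
  qed
qed

lemma feasible_relabel:
  assumes p: "contest_symmetry C N Nc v p" and feas: "feasible_RO C N Nc v bs"
  shows "feasible_RO C N Nc v (map ((`) p) bs)"
proof -
  have inv: "involution_on {1..N} p" using p unfolding contest_symmetry_def by blast
  have val: "\<forall>\<beta>\<in>set bs. \<beta> \<in> valid_ballots C N Nc v" using feas unfolding feasible_RO_def by blast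
  then have sub: "\<forall>\<beta>\<in>set bs. \<beta> \<subseteq> {1..N}" unfolding valid_ballots_def by blast
  have val': "\<forall>\<beta>\<in>set (map ((`) p) bs). \<beta> \<in> valid_ballots C N Nc v"
    using val valid_ballot_relabel[OF p] by auto
  have "\<exists>i\<in>{1..N}. Tsig C Nc v \<sigma> (map ((`) p) bs) i \<noteq> Tstar C Nc v (map ((`) p) bs) i"
    if \<sigma>: "bij_betw \<sigma> {1..N} {1..N}" and moved: "\<exists>i\<in>{1..N}. \<sigma> i \<noteq> i" for \<sigma>
  proof -
    have bij_p: "bij_betw p {1..N} {1..N}" by (rule involution_on_bij_betw[OF inv])
    have "bij_betw (p \<circ> \<sigma> \<circ> p) {1..N} {1..N}"
      by (intro bij_betw_trans[OF bij_p] bij_betw_trans[OF \<sigma>] bij_p)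
    moreover have "\<exists>i\<in>{1..N}. (p \<circ> \<sigma> \<circ> p) i \<noteq> i"
    proof -
      obtain i where i: "i \<in> {1..N}" "\<sigma> i \<noteq> i" using moved by blast
      then have "p (\<sigma> i) \<noteq> p i"
        using inj_onD[OF involution_on_inj_on[OF inv]] bij_betw_apply[OF \<sigma>] by blast
      then have "(p \<circ> \<sigma> \<circ> p) (p i) \<noteq> p i" using inv i unfolding involution_on_def by simp
      then show ?thesis using inv i unfolding involution_on_def by blast
    qed
    ultimately obtain j where j: "j \<in> {1..N}" "Tsig C Nc v (p \<circ> \<sigma> \<circ> p) bs j \<noteq> Tstar C Nc v bs j"
      using feas unfolding feasible_RO_def by blast
    have pj: "p j \<in> {1..N}" "p (p j) = j" using inv j(1) unfolding involution_on_def by auto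
    have "Tsig C Nc v \<sigma> (map ((`) p) bs) (p j) = Tsig C Nc v (p \<circ> \<sigma> \<circ> p) bs j"
      using Tsig_relabel[OF p sub _ pj(1)] bij_betw_imp_surj_on[OF \<sigma>] pj(2) by simp
    moreover have "Tstar C Nc v (map ((`) p) bs) (p j) = Tstar C Nc v bs j"
      using Tstar_eq_nvotes[OF val' pj(1)] Tstar_eq_nvotes[OF val j(1)] nvotes_relabel[OF p sub pj(1)] pj(2)
      by simp
    ultimately show ?thesis using j(2) pj(1) by metis
  qed
  with val' show ?thesis unfolding feasible_RO_def by blast
qed

lemma contest_symmetry_swap_sorted:
  assumes c: "c \<in> {1..C}" "c' \<in> {1..C}" "c \<noteq> c'" and eqv: "contest_equiv Nc v c c'"
  shows "contest_symmetry C N Nc v (swap_sorted (Nc c) (Nc c'))"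
proof -
  let ?p = "swap_sorted (Nc c) (Nc c')"
  have fin: "finite (Nc c)" "finite (Nc c')" using finite_contest c by auto
  have disj: "Nc c \<inter> Nc c' = {}" using contests_disjoint c by blast
  have card: "card (Nc c) = card (Nc c')" and vv: "v c = v c'"
    using eqv unfolding contest_equiv_def by auto
  note image = swap_sorted_image[OF fin disj card]
  have fixed: "?p ` Nc d = Nc d" if d: "d \<in> {1..C}" "d \<noteq> c" "d \<noteq> c'" for d
  proof -
    have "?p x = x" if "x \<in> Nc d" for x
      using that contests_disjoint[OF d(1) c(1)] contests_disjoint[OF d(1) c(2)] d
      by (intro swap_sorted_outside[OF fin]) auto
    then show ?thesis by simp
  qed
  have "?p x \<in> {1..N}" if x: "x \<in> {1..N}" for x
  proof (cases "x \<in> Nc c \<union> Nc c'")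
    case True
    then have "?p x \<in> Nc c' \<union> Nc c" using image by blast
    then show ?thesis using contest_subset c by blast
  next
    case False
    then show ?thesis using x swap_sorted_outside[OF fin] by simp
  qed
  then have "involution_on {1..N} ?p"
    unfolding involution_on_def using swap_sorted_swap_sorted[OF fin disj card] by blast
  moreover have "\<exists>d'\<in>{1..C}. ?p ` Nc d = Nc d' \<and> v d' = v d" if "d \<in> {1..C}" for d
    using that fixed image c vv by (metis (full_types))
  ultimately show ?thesis unfolding contest_symmetry_def by blast
qed

lemma contest_key_relabel:
  assumes p: "contest_symmetry C N Nc v p" and sub: "\<forall>\<beta>\<in>set bs. \<beta> \<subseteq> {1..N}"
    and d: "d \<in> {1..C}" and card: "card (Nc d) = card (Nc d')"
    and kth: "\<forall>m\<in>{1..card (Nc d)}. p (kth (Nc d) m) = kth (Nc d') m"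
  shows "contest_key Nc M (map ((`) p) bs) d = contest_key Nc M bs d'"
  unfolding contest_key_def base_value_def card[symmetric]
proof (intro sum.cong refl)
  fix m assume m: "m \<in> {1..card (Nc d)}"
  then have "kth (Nc d) m \<in> {1..N}" using kth_mem finite_contest contest_subset d by blast
  then show "nvotes (map ((`) p) bs) (kth (Nc d) m) * M ^ m = nvotes bs (kth (Nc d') m) * M ^ m"
    using nvotes_relabel[OF p sub] kth m by simp
qed

lemma feasible_singleton_ballots: "feasible_RO C N Nc v (singleton_ballots N)"
proof -
  let ?bs = "singleton_ballots N"
  have v_pos: "v d > 0" if "d \<in> {1..C}" for d
    using style that unfolding ballot_style_def by blast
  have at_most_one: "card (A \<inter> \<beta>) \<le> 1" if \<beta>: "\<beta> \<in> set ?bs" for A \<beta>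
  proof -
    obtain x where "\<beta> = {x}" using \<beta> unfolding set_singleton_ballots by blast
    then show ?thesis using card_mono[of "{x}"] by auto
  qed
  have val: "\<forall>\<beta>\<in>set ?bs. \<beta> \<in> valid_ballots C N Nc v"
  proof
    fix \<beta> assume \<beta>: "\<beta> \<in> set ?bs"
    have "card (Nc d \<inter> \<beta>) \<le> v d" if "d \<in> {1..C}" for d
      using at_most_one[OF \<beta>, of "Nc d"] v_pos[OF that] by linarith
    moreover have "\<beta> \<subseteq> {1..N}" using \<beta> unfolding set_singleton_ballots by auto
    ultimately show "\<beta> \<in> valid_ballots C N Nc v" unfolding valid_ballots_def by blast
  qed
  \<comment> \<open>Singleton ballots never overvote, so every \<open>\<sigma>\<close> just reads off the vote counts.\<close>
  have Tsig_singletons: "Tsig C Nc v \<sigma> ?bs i = nvotes ?bs (\<sigma> i)" if i: "i \<in> {1..N}" for \<sigma> i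
  proof -
    have "card (\<sigma> ` Nc (contest_of C Nc i) \<inter> ?bs ! b) \<le> v (contest_of C Nc i)" if "b < length ?bs" for b
      using at_most_one[OF nth_mem[OF that], of "\<sigma> ` Nc (contest_of C Nc i)"]
        v_pos[OF conjunct1[OF contest_of_mem[OF i]]] by linarith
    then show ?thesis unfolding Tsig_eq nvotes_eq_sum by (intro sum.cong) auto
  qed
  have "\<exists>i\<in>{1..N}. Tsig C Nc v \<sigma> ?bs i \<noteq> Tstar C Nc v ?bs i"
    if \<sigma>: "bij_betw \<sigma> {1..N} {1..N}" and moved: "\<exists>i\<in>{1..N}. \<sigma> i \<noteq> i" for \<sigma>
  proof -
    obtain i where i: "i \<in> {1..N}" "\<sigma> i \<noteq> i" using moved by blast
    then have "Tsig C Nc v \<sigma> ?bs i \<noteq> Tstar C Nc v ?bs i"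
      using Tsig_singletons Tstar_eq_nvotes[OF val] nvotes_singleton_ballots bij_betw_apply[OF \<sigma>] by simp
    with i(1) show ?thesis by blast
  qed
  with val show ?thesis unfolding feasible_RO_def by blast
qed

lemma optimal_exists: "\<exists>bs. optimal_RO C N Nc v bs"
  using ex_has_least_nat[of "feasible_RO C N Nc v", OF feasible_singleton_ballots, of length]
  unfolding optimal_RO_def by blast

lemma exists_optimal_maximizing_potential:
  "\<exists>bs. optimal_RO C N Nc v bs \<and>
     (\<forall>bs'. optimal_RO C N Nc v bs' \<longrightarrow>
        potential C Nc (Suc (length bs)) bs' \<le> potential C Nc (Suc (length bs)) bs)"
proof -
  obtain bs0 where bs0: "optimal_RO C N Nc v bs0" using optimal_exists by blast
  define M where "M = Suc (length bs0)"
  have same_length: "length bs = length bs0" if "optimal_RO C N Nc v bs" for bs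
    using that bs0 unfolding optimal_RO_def by (meson le_antisym)
  have "\<forall>bs. optimal_RO C N Nc v bs \<longrightarrow>
      potential C Nc M bs < Suc (\<Sum>d\<in>{1..C}. d * M ^ Suc (card (Nc d)))"
    using potential_le same_length unfolding M_def by (metis le_imp_less_Suc lessI)
  then obtain bs where "optimal_RO C N Nc v bs"
    and "\<forall>bs'. optimal_RO C N Nc v bs' \<longrightarrow> potential C Nc M bs' \<le> potential C Nc M bs"
    using Lattices_Big.ex_has_greatest_nat[of "optimal_RO C N Nc v" bs0 "potential C Nc M"] bs0 by blast
  moreover have "M = Suc (length bs)" using same_length[OF \<open>optimal_RO C N Nc v bs\<close>] M_def by simp
  ultimately show ?thesis by blast
qed

lemma feasible_distinguishes_equivalent_contests:
  assumes feas: "feasible_RO C N Nc v bs"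
    and c: "c \<in> {1..C}" "c' \<in> {1..C}" "c \<noteq> c'" and eqv: "contest_equiv Nc v c c'"
  shows "\<exists>m\<in>{1..card (Nc c)}. nvotes bs (kth (Nc c) m) \<noteq> nvotes bs (kth (Nc c') m)"
proof (rule ccontr)
  assume same: "\<not> ?thesis"
  define p where "p = swap_sorted (Nc c) (Nc c')"
  have fin: "finite (Nc c)" "finite (Nc c')" using finite_contest c by auto
  have disj: "Nc c \<inter> Nc c' = {}" using contests_disjoint c by blast
  have card: "card (Nc c) = card (Nc c')" using eqv unfolding contest_equiv_def by simp
  note swap_kth = swap_sorted_kth[OF fin disj card, folded p_def]
  have "nvotes bs (p i) = nvotes bs i" if "i \<in> {1..N}" for i
  proof -
    consider m where "m \<in> {1..card (Nc c)}" "i = kth (Nc c) m"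
      | m where "m \<in> {1..card (Nc c)}" "i = kth (Nc c') m"
      | "i \<notin> Nc c" "i \<notin> Nc c'"
      using kth_surj fin card by metis
    then show ?thesis
      using same swap_kth swap_sorted_outside[OF fin, folded p_def] by cases auto
  qed
  moreover have "p (kth (Nc c) 1) \<noteq> kth (Nc c) 1" and "kth (Nc c) 1 \<in> {1..N}"
  proof -
    have one: "1 \<in> {1..card (Nc c)}" using fin contest_nonempty c by (simp add: Suc_leI card_gt_0_iff)
    then show "p (kth (Nc c) 1) \<noteq> kth (Nc c) 1"
      using swap_kth(1)[OF one] kth_mem[OF fin(1) one] kth_mem[OF fin(2), of 1] one card disj by auto
    show "kth (Nc c) 1 \<in> {1..N}" using kth_mem[OF fin(1) one] contest_subset c by blast
  qed
  ultimately show False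
    using feasible_contest_symmetry_moves_nvotes[OF feas contest_symmetry_swap_sorted[OF c eqv, folded p_def]]
    by blast
qed

lemma potential_increases_by_swap:
  assumes sub: "\<forall>\<beta>\<in>set bs. \<beta> \<subseteq> {1..N}"
    and c: "c \<in> {1..C}" "c' \<in> {1..C}" "c < c'" and eqv: "contest_equiv Nc v c c'"
    and less: "contest_key Nc M bs c' < contest_key Nc M bs c"
  shows "potential C Nc M bs < potential C Nc M (map ((`) (swap_sorted (Nc c) (Nc c'))) bs)"
proof -
  define p where "p = swap_sorted (Nc c) (Nc c')"
  have ne: "c \<noteq> c'" using c by simp
  have fin: "finite (Nc c)" "finite (Nc c')" using finite_contest c by auto
  have disj: "Nc c \<inter> Nc c' = {}" using contests_disjoint c by blast
  have card: "card (Nc c) = card (Nc c')" using eqv unfolding contest_equiv_def by simp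
  note swap_kth = swap_sorted_kth[OF fin disj card, folded p_def]
  note relabel = contest_key_relabel[OF contest_symmetry_swap_sorted[OF c(1,2) ne eqv, folded p_def] sub]
  have key_c: "contest_key Nc M (map ((`) p) bs) c = contest_key Nc M bs c'"
    using relabel[OF c(1) card] swap_kth by blast
  have key_c': "contest_key Nc M (map ((`) p) bs) c' = contest_key Nc M bs c"
    using relabel[OF c(2) card[symmetric]] swap_kth card by simp
  have key_other: "contest_key Nc M (map ((`) p) bs) d = contest_key Nc M bs d"
    if d: "d \<in> {1..C} - {c} - {c'}" for d
  proof (rule relabel)
    have "kth (Nc d) m \<notin> Nc c \<union> Nc c'" if "m \<in> {1..card (Nc d)}" for m
      using kth_mem[OF finite_contest that] contests_disjoint[of d c] contests_disjoint[of d c'] d c by blast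
    then show "\<forall>m\<in>{1..card (Nc d)}. p (kth (Nc d) m) = kth (Nc d) m"
      using swap_sorted_outside[OF fin, folded p_def] by blast
  qed (use d in auto)
  show ?thesis
    unfolding potential_def p_def[symmetric]
    using weighted_sum_increases_by_swap[of "{1..C}" c c' "contest_key Nc M bs" "contest_key Nc M (map ((`) p) bs)"]
      c less key_c key_c' key_other by simp
qed

lemma contest_prec_if_maximizing_potential:
  assumes opt: "optimal_RO C N Nc v bs"
    and max: "\<forall>bs'. optimal_RO C N Nc v bs' \<longrightarrow>
                potential C Nc (Suc (length bs)) bs' \<le> potential C Nc (Suc (length bs)) bs"
    and c: "c \<in> {1..C}" "c' \<in> {1..C}" "c < c'" and eqv: "contest_equiv Nc v c c'"
  shows "contest_prec Nc v bs c c'"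
proof -
  define M where "M = Suc (length bs)"
  define a b where "a m = nvotes bs (kth (Nc c) m)" and "b m = nvotes bs (kth (Nc c') m)" for m
  have feas: "feasible_RO C N Nc v bs" using opt unfolding optimal_RO_def by blast
  then have sub: "\<forall>\<beta>\<in>set bs. \<beta> \<subseteq> {1..N}" unfolding feasible_RO_def valid_ballots_def by blast
  have digits: "\<forall>m. a m < M" "\<forall>m. b m < M"
    using nvotes_le_length unfolding a_def b_def M_def by (simp_all add: le_imp_less_Suc)
  have keys: "contest_key Nc M bs c = base_value a M (card (Nc c))"
    "contest_key Nc M bs c' = base_value b M (card (Nc c))"
    using eqv unfolding contest_key_def a_def b_def contest_equiv_def by simp_all
  have "contest_key Nc M bs c \<noteq> contest_key Nc M bs c'"
    using feasible_distinguishes_equivalent_contests[OF feas c(1,2) _ eqv] c(3)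
      base_value_inject[OF digits] unfolding keys a_def b_def by fastforce
  moreover have "\<not> contest_key Nc M bs c' < contest_key Nc M bs c"
  proof
    let ?bs' = "map ((`) (swap_sorted (Nc c) (Nc c'))) bs"
    assume "contest_key Nc M bs c' < contest_key Nc M bs c"
    then have "potential C Nc M bs < potential C Nc M ?bs'"
      by (rule potential_increases_by_swap[OF sub c eqv])
    moreover have "optimal_RO C N Nc v ?bs'"
      using feasible_relabel[OF contest_symmetry_swap_sorted[OF c(1,2) _ eqv] feas] opt c(3)
      unfolding optimal_RO_def by simp
    ultimately show False using max unfolding M_def by (meson leD)
  qed
  ultimately have "base_value a M (card (Nc c)) < base_value b M (card (Nc c))"
    unfolding keys by linarith
  then show ?thesis
    using base_value_less_imp_lex[OF digits] eqv unfolding contest_prec_def a_def b_def by blast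
qed

end

theorem proposition2:
  fixes C N :: nat and Nc :: "nat \<Rightarrow> nat set" and v :: "nat \<Rightarrow> nat"
  assumes "ballot_style C N Nc v"
  shows "\<exists>bs. optimal_RO C N Nc v bs \<and>
           (\<forall>c\<in>{1..C}. \<forall>c'\<in>{1..C}. c < c' \<and> contest_equiv Nc v c c' \<longrightarrow>
              contest_prec Nc v bs c c')"
proof -
  obtain bs where opt: "optimal_RO C N Nc v bs"
    and max: "\<forall>bs'. optimal_RO C N Nc v bs' \<longrightarrow>
                potential C Nc (Suc (length bs)) bs' \<le> potential C Nc (Suc (length bs)) bs"
    using exists_optimal_maximizing_potential[OF assms] by blast
  then show ?thesis using contest_prec_if_maximizing_potential[OF assms opt max] by blast
qed

end
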